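(* Assume the capacities satisfy (C1)–(C3). Let $\{\overline Z_t\}_{t\ge0}$ be the generation sizes of the NR-process defined below, and let $\{\mathcal N_t\}_{t\ge0}$ be the reachable sets of a uniformly chosen node $A$ in the Poissonian random graph $G_N$. For $\eta,\delta\in(-1/2,1/2)$ and all $t\le(1/2+\eta)\log_\nu N$, $$\mathbb P\Big(\sum_{k=0}^t\overline Z_k>N^{1/2+\delta}\Big)=O\big((\log_\nu N)N^{-(\delta-\eta)}\big)\quad\text{and}\quad\mathbb P\big(|\mathcal N_t|>N^{1/2+\delta}\big)=O\big((\log_\nu N)N^{-(\delta-\eta)}\big).$$
   Context: Capacities $\lambda_1,\dots,\lambda_N>0$ deterministic; $l_N=\sum_i\lambda_i$, $\mu_N=\frac1N\sum_i\lambda_i$, $\nu_N=\sum_i\lambda_i^2/\sum_i\lambda_i$, $f^{(N)}_n=\frac1N\sum_i e^{-\lambda_i}\frac{\lambda_i^n}{n!}$, $g^{(N)}_n=\frac{1}{N\mu_N}\sum_i e^{-\lambda_i}\frac{\lambda_i^{n+1}}{n!}$; $d_{TV}(p,q)=\frac12\sum_j|p_j-q_j|$. (C1): there are $\mu\in(0,\infty)$, $\nu\in(1,\infty)$, $\alpha_1>0$ with $|\mu_N-\mu|,|\nu_N-\nu|=O(N^{-\alpha_1})$. (C2): there are $N$-independent sequences $f,g$ and $\alpha_2>0$ with $d_{TV}(f^{(N)},f),d_{TV}(g^{(N)},g)=O(N^{-\alpha_2})$. (C3): there is $\tau>3$ such that for every $\varepsilon>0$ (with $\gamma:=\frac1{\tau-1}+\varepsilon<\frac12$),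 $\limsup_N\frac1N\sum_i\lambda_i^{\tau-1-\varepsilon}<\infty$ and $\max_i\lambda_i\le N^\gamma$. NR-process: marked branching process with $\overline Z_0=1$, root mark uniform on $\{1,\dots,N\}$; an individual with mark $m$ has, independently for each $i\in\{1,\dots,N\}$, a Poisson$(\lambda_i\lambda_m/l_N)$ number of children with mark $i$, independently over individuals; $\overline Z_t$ is the size of generation $t$. Poissonian random graph: independent Poisson$(\lambda_i\lambda_j/l_N)$ numbers of edges between distinct nodes $i,j$; $\mathcal N_t=\{j: d(A,j)\le t\}$ with $d$ the graph distance. *)

theory Defs
  imports "HOL-Probability.Probability" "HOL-Library.Landau_Symbols"
begin

text \<open>Capacities: lam N i is the capacity of node i (i < N) in the N-th graph.
  Nodes/marks are indexed by {0..<N} instead of {1..N}.\<close>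

definition lN :: "(nat \<Rightarrow> nat \<Rightarrow> real) \<Rightarrow> nat \<Rightarrow> real" where
  "lN lam N = (\<Sum>i<N. lam N i)"

definition muN :: "(nat \<Rightarrow> nat \<Rightarrow> real) \<Rightarrow> nat \<Rightarrow> real" where
  "muN lam N = lN lam N / real N"

definition nuN :: "(nat \<Rightarrow> nat \<Rightarrow> real) \<Rightarrow> nat \<Rightarrow> real" where
  "nuN lam N = (\<Sum>i<N. (lam N i)\<^sup>2) / lN lam N"

definition fN :: "(nat \<Rightarrow> nat \<Rightarrow> real) \<Rightarrow> nat \<Rightarrow> nat \<Rightarrow> real" where
  "fN lam N n = (1 / real N) * (\<Sum>i<N. exp (- lam N i) * lam N i ^ n / fact n)"

definition gN :: "(nat \<Rightarrow> nat \<Rightarrow> real) \<Rightarrow> nat \<Rightarrow> nat \<Rightarrow> real" where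
  "gN lam N n = (1 / (real N * muN lam N)) * (\<Sum>i<N. exp (- lam N i) * lam N i ^ (n+1) / fact n)"

text \<open>Total variation distance of two sequences (the series is required to converge
  separately where it is used).\<close>
definition dTV :: "(nat \<Rightarrow> real) \<Rightarrow> (nat \<Rightarrow> real) \<Rightarrow> real" where
  "dTV p q = (1/2) * (\<Sum>j. \<bar>p j - q j\<bar>)"

definition cond_C1 :: "(nat \<Rightarrow> nat \<Rightarrow> real) \<Rightarrow> real \<Rightarrow> real \<Rightarrow> bool" where
  "cond_C1 lam mu nu \<longleftrightarrow> 0 < mu \<and> 1 < nu \<and>
     (\<exists>\<alpha>1>0. (\<lambda>N. \<bar>muN lam N - mu\<bar>) \<in> O(\<lambda>N. real N powr (-\<alpha>1)) \<and>
              (\<lambda>N. \<bar>nuN lam N - nu\<bar>) \<in> O(\<lambda>N. real N powr (-\<alpha>1)))"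

definition cond_C2 :: "(nat \<Rightarrow> nat \<Rightarrow> real) \<Rightarrow> bool" where
  "cond_C2 lam \<longleftrightarrow> (\<exists>(f::nat \<Rightarrow> real) (g::nat \<Rightarrow> real) \<alpha>2. \<alpha>2 > 0 \<and>
     (\<forall>\<^sub>F N in sequentially. summable (\<lambda>j. \<bar>fN lam N j - f j\<bar>) \<and>
                               summable (\<lambda>j. \<bar>gN lam N j - g j\<bar>)) \<and>
     (\<lambda>N. dTV (fN lam N) f) \<in> O(\<lambda>N. real N powr (-\<alpha>2)) \<and>
     (\<lambda>N. dTV (gN lam N) g) \<in> O(\<lambda>N. real N powr (-\<alpha>2)))"

definition cond_C3 :: "(nat \<Rightarrow> nat \<Rightarrow> real) \<Rightarrow> bool" where
  "cond_C3 lam \<longleftrightarrow> (\<exists>\<tau>::real. \<tau> > 3 \<and>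
     (\<forall>\<epsilon>>0. 1/(\<tau>-1) + \<epsilon> < 1/2 \<longrightarrow>
        limsup (\<lambda>N. ereal ((1/real N) * (\<Sum>i<N. lam N i powr (\<tau> - 1 - \<epsilon>)))) < \<infinity> \<and>
        (\<forall>N\<ge>1. \<forall>i<N. lam N i \<le> real N powr (1/(\<tau>-1) + \<epsilon>))))"

text \<open>A generation is the list of marks of its individuals.\<close>
definition nr_step :: "(nat \<Rightarrow> nat \<Rightarrow> real) \<Rightarrow> nat \<Rightarrow> nat list \<Rightarrow> nat list pmf" where
  "nr_step lam N ms =
     map_pmf (\<lambda>c. concat (map (\<lambda>j. concat (map (\<lambda>i. replicate (c (j, i)) i) [0..<N]))
                              [0..<length ms]))
       (Pi_pmf ({0..<length ms} \<times> {0..<N}) 0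
          (\<lambda>(j, i). poisson_pmf (lam N i * lam N (ms ! j) / lN lam N)))"

primrec nr_history :: "(nat \<Rightarrow> nat \<Rightarrow> real) \<Rightarrow> nat \<Rightarrow> nat \<Rightarrow> nat list list pmf" where
  "nr_history lam N 0 = map_pmf (\<lambda>m. [[m]]) (pmf_of_set {0..<N})"
| "nr_history lam N (Suc t) =
     bind_pmf (nr_history lam N t) (\<lambda>h. map_pmf (\<lambda>nxt. h @ [nxt]) (nr_step lam N (last h)))"

definition nr_total_tail :: "(nat \<Rightarrow> nat \<Rightarrow> real) \<Rightarrow> nat \<Rightarrow> nat \<Rightarrow> real \<Rightarrow> real" where
  "nr_total_tail lam N t x =
     measure_pmf.prob (nr_history lam N t) {h. real (\<Sum>k\<le>t. length (h ! k)) > x}"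

definition poi_graph :: "(nat \<Rightarrow> nat \<Rightarrow> real) \<Rightarrow> nat \<Rightarrow> (nat \<times> nat \<Rightarrow> nat) pmf" where
  "poi_graph lam N = Pi_pmf {(i, j). i < j \<and> j < N} 0
      (\<lambda>(i, j). poisson_pmf (lam N i * lam N j / lN lam N))"

definition adj_rel :: "nat \<Rightarrow> (nat \<times> nat \<Rightarrow> nat) \<Rightarrow> (nat \<times> nat) set" where
  "adj_rel N e = {(i, j). i < N \<and> j < N \<and> i \<noteq> j \<and> e (min i j, max i j) > 0}"

definition ball_t :: "nat \<Rightarrow> (nat \<times> nat \<Rightarrow> nat) \<Rightarrow> nat \<Rightarrow> nat \<Rightarrow> nat set" where
  "ball_t N e a t = {j. \<exists>k\<le>t. (a, j) \<in> adj_rel N e ^^ k}"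

definition graph_ball_tail :: "(nat \<Rightarrow> nat \<Rightarrow> real) \<Rightarrow> nat \<Rightarrow> nat \<Rightarrow> real \<Rightarrow> real" where
  "graph_ball_tail lam N t x =
     measure_pmf.prob (pair_pmf (pmf_of_set {0..<N}) (poi_graph lam N))
       {(a, e). real (card (ball_t N e a t)) > x}"

end

theory Submission
  imports Defs
begin

(* Both tail bounds follow from Markov's inequality once the first moments are known.
   In the NR-process the total capacity W_t of generation t satisfies E[Z_(t+1) | W_t] = W_t and
   E[W_(t+1) | W_t] = nu_N W_t, so E[Z_0 + ... + Z_t] = 1 + sum_(k<t) mu_N nu_N^k.
   In the graph, every node within distance t of A is the endpoint of a self-avoiding path of
   length at most t starting at A; such a path is present with probability at most the product of
   its Poisson edge intensities, and summing these products over all paths gives the same bound.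
   By (C1), nu_N^k <= e^O(1) N^(1/2+eta) for k <= (1/2+eta) log_nu N, so both means are
   O(log_nu N * N^(1/2+eta)), and Markov's inequality at N^(1/2+delta) gives the claim. *)

section \<open>Poisson variables and first moments\<close>

lemma poisson_pmf_mean:
  assumes r: "0 < r"
  shows "(\<integral>\<^sup>+k. of_nat k \<partial>poisson_pmf r) = ennreal r"
proof -
  have exp_series: "(\<lambda>k. r ^ k / fact k) sums exp r"
    using exp_converges[of r] by (simp add: divide_inverse mult.commute)
  have "(\<lambda>k. r * exp (-r) * (r ^ k / fact k)) sums (r * exp (-r) * exp r)"
    by (rule sums_mult[OF exp_series])
  also have "r * exp (-r) * exp r = r"
    by (simp add: exp_minus)
  also have "(\<lambda>k. r * exp (-r) * (r ^ k / fact k))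
      = (\<lambda>k. r ^ Suc k / fact (Suc k) * exp (-r) * real (Suc k))"
  proof (rule ext)
    fix k
    have "real (Suc k) * fact k \<noteq> 0" by simp
    then show "r * exp (-r) * (r ^ k / fact k) = r ^ Suc k / fact (Suc k) * exp (-r) * real (Suc k)"
      by (simp only: fact_Suc of_nat_mult) (simp add: field_simps)
  qed
  finally have "(\<lambda>k. r ^ k / fact k * exp (-r) * real k) sums (r + r ^ 0 / fact 0 * exp (-r) * real 0)"
    by (rule sums_Suc_iff[THEN iffD1])
  then have "(\<Sum>k. ennreal (r ^ k / fact k * exp (-r) * real k)) = ennreal r"
    using r by (intro suminf_ennreal_eq) auto
  then show ?thesis
    using r by (simp add: nn_integral_measure_pmf nn_integral_count_space_nat
        ennreal_of_nat_eq_real_of_nat flip: ennreal_mult)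
qed

lemma prob_poisson_pmf_pos_le:
  assumes r: "0 < r"
  shows "measure_pmf.prob (poisson_pmf r) {0<..} \<le> r"
proof -
  have "measure_pmf.prob (poisson_pmf r) {0<..} = 1 - measure_pmf.prob (poisson_pmf r) {0}"
    by (subst measure_pmf.prob_compl[symmetric]) (auto intro!: arg_cong[where f="measure_pmf.prob _"])
  also have "\<dots> = 1 - exp (-r)"
    using r by (simp add: measure_pmf_single)
  also have "\<dots> \<le> r"
    using exp_ge_add_one_self[of "-r"] by linarith
  finally show ?thesis .
qed

lemma nn_integral_Pi_pmf_poisson_component:
  assumes "finite A" "x \<in> A" "p x = poisson_pmf r" "0 < r"
  shows "(\<integral>\<^sup>+c. of_nat (c x) \<partial>Pi_pmf A 0 p) = ennreal r"
proof -
  have "(\<integral>\<^sup>+c. of_nat (c x) \<partial>Pi_pmf A 0 p) = (\<integral>\<^sup>+n. of_nat n \<partial>map_pmf (\<lambda>c. c x) (Pi_pmf A 0 p))"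
    by simp
  also have "\<dots> = ennreal r"
    using assms by (simp add: Pi_pmf_component poisson_pmf_mean)
  finally show ?thesis .
qed

lemma prob_Pi_pmf_poisson_all_pos_le:
  assumes "finite A" "K \<subseteq> A" "\<And>x. x \<in> A \<Longrightarrow> p x = poisson_pmf (r x)" "\<And>x. x \<in> A \<Longrightarrow> 0 < r x"
  shows "measure_pmf.prob (Pi_pmf A 0 p) {e. \<forall>x\<in>K. 0 < e x} \<le> (\<Prod>x\<in>K. r x)"
proof -
  define B where "B = (\<lambda>x. if x \<in> K then {0<..} else (UNIV :: nat set))"
  have "{e. \<forall>x\<in>K. 0 < e x} = Pi A B"
    using assms(2) by (auto simp: B_def Pi_def)
  then have "measure_pmf.prob (Pi_pmf A 0 p) {e. \<forall>x\<in>K. 0 < e x}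
      = (\<Prod>x\<in>A. measure_pmf.prob (p x) (B x))"
    using assms(1) by (simp add: measure_Pi_pmf_Pi)
  also have "\<dots> = (\<Prod>x\<in>K. measure_pmf.prob (poisson_pmf (r x)) {0<..})"
    using assms(1-3) by (subst prod.subset_diff[of K A]) (auto simp: B_def subset_iff intro!: prod.cong)
  also have "\<dots> \<le> (\<Prod>x\<in>K. r x)"
    using assms by (intro prod_mono) (auto intro: prob_poisson_pmf_pos_le)
  finally show ?thesis .
qed

lemma measure_pmf_Markov_inequality:
  fixes f :: "'a \<Rightarrow> real" and M :: "'a pmf"
  assumes x: "0 < x" and R: "0 \<le> R" and mean: "(\<integral>\<^sup>+y. ennreal (f y) \<partial>M) \<le> ennreal R"
  shows "measure_pmf.prob M {y. x < f y} \<le> R / x"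
proof -
  have "emeasure M {y. x < f y} = (\<integral>\<^sup>+y. indicator {y. x < f y} y \<partial>M)"
    by simp
  also have "\<dots> \<le> (\<integral>\<^sup>+y. ennreal (f y) * ennreal (1 / x) \<partial>M)"
  proof (intro nn_integral_mono)
    fix y
    have "1 \<le> ennreal (f y / x)" if "x < f y"
      using that x by (simp add: ennreal_leI)
    then show "indicator {y. x < f y} y \<le> ennreal (f y) * ennreal (1 / x)"
      using x by (auto simp: indicator_def simp flip: ennreal_mult)
  qed
  also have "\<dots> = (\<integral>\<^sup>+y. ennreal (f y) \<partial>M) * ennreal (1 / x)"
    by (simp add: nn_integral_multc)
  also have "\<dots> \<le> ennreal R * ennreal (1 / x)"
    by (intro mult_right_mono mean) simp
  also have "\<dots> = ennreal (R / x)"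
    using R x by (simp flip: ennreal_mult)
  finally show ?thesis
    using R x by (simp add: measure_pmf.emeasure_eq_measure)
qed

lemma nn_integral_card_filter:
  fixes M :: "'a pmf"
  assumes "finite S"
  shows "(\<integral>\<^sup>+\<omega>. of_nat (card {x \<in> S. P \<omega> x}) \<partial>M) = (\<Sum>x\<in>S. emeasure M {\<omega>. P \<omega> x})"
proof -
  have "of_nat (card {x \<in> S. P \<omega> x}) = (\<Sum>x\<in>S. indicator {\<omega>. P \<omega> x} \<omega> :: ennreal)" for \<omega>
    using assms by (simp add: indicator_def sum.If_cases Int_def)
  then show ?thesis
    using assms by (simp add: nn_integral_sum)
qed

section \<open>Edge intensities\<close>

definition edge_rate :: "(nat \<Rightarrow> nat \<Rightarrow> real) \<Rightarrow> nat \<Rightarrow> nat \<Rightarrow> nat \<Rightarrow> real" where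
  "edge_rate lam N i j = lam N i * lam N j / lN lam N"

lemma edge_rate_commute: "edge_rate lam N i j = edge_rate lam N j i"
  by (simp add: edge_rate_def mult.commute)

lemma sum_edge_rate_weighted:
  "(\<Sum>i<N. edge_rate lam N i j * lam N i) = nuN lam N * lam N j"
  unfolding edge_rate_def nuN_def
  by (simp add: sum_divide_distrib[symmetric] sum_distrib_left power2_eq_square mult_ac)

locale pos_capacities =
  fixes lam :: "nat \<Rightarrow> nat \<Rightarrow> real" and N :: nat
  assumes pos: "\<And>i. i < N \<Longrightarrow> 0 < lam N i"
begin

lemma lN_pos: "0 < N \<Longrightarrow> 0 < lN lam N"
  unfolding lN_def by (intro sum_pos) (auto intro: pos)

lemma muN_nonneg: "0 \<le> muN lam N"
  unfolding muN_def lN_def by (intro divide_nonneg_nonneg sum_nonneg) (auto intro: less_imp_le pos)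

lemma nuN_nonneg: "0 \<le> nuN lam N"
  unfolding nuN_def lN_def by (intro divide_nonneg_nonneg sum_nonneg) (auto intro: less_imp_le pos)

lemma edge_rate_pos: "i < N \<Longrightarrow> j < N \<Longrightarrow> 0 < edge_rate lam N i j"
  unfolding edge_rate_def by (intro divide_pos_pos mult_pos_pos lN_pos pos) auto

lemma sum_edge_rate: "j < N \<Longrightarrow> (\<Sum>i<N. edge_rate lam N i j) = lam N j"
  using lN_pos unfolding edge_rate_def lN_def
  by (simp add: sum_divide_distrib[symmetric] sum_distrib_right[symmetric])

lemma ennreal_sum_edge_rate:
  assumes "j < N"
  shows "(\<Sum>i<N. ennreal (edge_rate lam N i j)) = ennreal (lam N j)"
  using assms by (subst sum_ennreal) (auto simp: sum_edge_rate intro: less_imp_le edge_rate_pos)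

lemma ennreal_sum_edge_rate_weighted:
  assumes "j < N"
  shows "(\<Sum>i<N. ennreal (edge_rate lam N i j) * ennreal (lam N i))
           = ennreal (nuN lam N) * ennreal (lam N j)"
proof -
  have "(\<Sum>i<N. ennreal (edge_rate lam N i j) * ennreal (lam N i))
      = ennreal (\<Sum>i<N. edge_rate lam N i j * lam N i)"
    using assms pos edge_rate_pos
    by (subst sum_ennreal[symmetric]) (auto simp: ennreal_mult less_imp_le)
  then show ?thesis
    using nuN_nonneg less_imp_le[OF pos[OF assms]] by (simp add: sum_edge_rate_weighted ennreal_mult)
qed

end

section \<open>Expected size of the NR-process\<close>

lemma sum_list_concat: "sum_list (concat xss) = (\<Sum>xs\<leftarrow>xss. sum_list xs)"
  by (induction xss) auto

lemma nth_less_if_set_subset_lessThan: "set ms \<subseteq> {..<N} \<Longrightarrow> j < length ms \<Longrightarrow> ms ! j < N"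
  using nth_mem by blast

definition generation_weight :: "(nat \<Rightarrow> nat \<Rightarrow> real) \<Rightarrow> nat \<Rightarrow> nat list \<Rightarrow> ennreal" where
  "generation_weight lam N ms = (\<Sum>m\<leftarrow>ms. ennreal (lam N m))"

lemma generation_weight_conv_sum:
  "generation_weight lam N ms = (\<Sum>j<length ms. ennreal (lam N (ms ! j)))"
  by (simp add: generation_weight_def sum_list_sum_nth atLeast0LessThan)

definition nr_mean_total :: "(nat \<Rightarrow> nat \<Rightarrow> real) \<Rightarrow> nat \<Rightarrow> nat \<Rightarrow> real" where
  "nr_mean_total lam N t = 1 + (\<Sum>k<t. muN lam N * nuN lam N ^ k)"

lemma nr_mean_total_Suc:
  "nr_mean_total lam N (Suc t) = nr_mean_total lam N t + muN lam N * nuN lam N ^ t"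
  by (simp add: nr_mean_total_def)

lemma set_pmf_nr_step: "ys \<in> set_pmf (nr_step lam N ms) \<Longrightarrow> set ys \<subseteq> {..<N}"
  unfolding nr_step_def by auto

lemma set_pmf_nr_history:
  assumes "0 < N" "h \<in> set_pmf (nr_history lam N t)"
  shows "length h = Suc t \<and> (\<forall>ms\<in>set h. set ms \<subseteq> {..<N})"
  using assms(2)
proof (induction t arbitrary: h)
  case 0
  then show ?case using assms(1) by auto
next
  case (Suc t)
  then obtain h' ys where "h = h' @ [ys]" "h' \<in> set_pmf (nr_history lam N t)"
      "ys \<in> set_pmf (nr_step lam N (last h'))"
    by auto
  then show ?case using Suc.IH set_pmf_nr_step by auto
qed

lemma set_last_nr_history:
  "0 < N \<Longrightarrow> h \<in> set_pmf (nr_history lam N t) \<Longrightarrow> set (last h) \<subseteq> {..<N}"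
  using set_pmf_nr_history[of N h lam t] last_in_set[of h] by fastforce

context pos_capacities
begin

lemma nr_mean_total_nonneg: "0 \<le> nr_mean_total lam N t"
  unfolding nr_mean_total_def using muN_nonneg nuN_nonneg
  by (intro add_nonneg_nonneg sum_nonneg mult_nonneg_nonneg zero_le_power) auto

lemma nr_step_mean:
  fixes g :: "nat \<Rightarrow> ennreal"
  assumes ms: "set ms \<subseteq> {..<N}"
  shows "(\<integral>\<^sup>+ys. (\<Sum>y\<leftarrow>ys. g y) \<partial>nr_step lam N ms)
           = (\<Sum>j<length ms. \<Sum>i<N. ennreal (edge_rate lam N i (ms ! j)) * g i)"
proof -
  define A where "A = {0..<length ms} \<times> {0..<N}"
  define p where "p = (\<lambda>(j, i). poisson_pmf (edge_rate lam N i (ms ! j)))"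
  have offspring_sum: "(\<Sum>y\<leftarrow>concat (map (\<lambda>j. concat (map (\<lambda>i. replicate (c (j, i)) i) [0..<N]))
        [0..<length ms]). g y) = (\<Sum>j<length ms. \<Sum>i<N. of_nat (c (j, i)) * g i)" for c
    by (simp add: map_concat sum_list_concat o_def sum_list_replicate
        interv_sum_list_conv_sum_set_nat atLeast0LessThan)
  have "(\<integral>\<^sup>+ys. (\<Sum>y\<leftarrow>ys. g y) \<partial>nr_step lam N ms)
      = (\<integral>\<^sup>+c. (\<Sum>j<length ms. \<Sum>i<N. of_nat (c (j, i)) * g i) \<partial>Pi_pmf A 0 p)"
    unfolding nr_step_def edge_rate_def[symmetric] A_def p_def by (simp add: offspring_sum)
  also have "\<dots> = (\<Sum>j<length ms. \<Sum>i<N. (\<integral>\<^sup>+c. of_nat (c (j, i)) \<partial>Pi_pmf A 0 p) * g i)"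
    by (simp add: nn_integral_sum nn_integral_multc)
  also have "\<dots> = (\<Sum>j<length ms. \<Sum>i<N. ennreal (edge_rate lam N i (ms ! j)) * g i)"
    using ms by (intro sum.cong refl, subst nn_integral_Pi_pmf_poisson_component)
      (auto simp: A_def p_def nth_less_if_set_subset_lessThan intro!: edge_rate_pos)
  finally show ?thesis .
qed

lemma nr_step_mean_length:
  assumes ms: "set ms \<subseteq> {..<N}"
  shows "(\<integral>\<^sup>+ys. of_nat (length ys) \<partial>nr_step lam N ms) = generation_weight lam N ms"
proof -
  have "(\<integral>\<^sup>+ys. of_nat (length ys) \<partial>nr_step lam N ms) = (\<integral>\<^sup>+ys. (\<Sum>y\<leftarrow>ys. 1) \<partial>nr_step lam N ms)"
    by (simp add: sum_list_triv)
  also have "\<dots> = (\<Sum>j<length ms. \<Sum>i<N. ennreal (edge_rate lam N i (ms ! j)))"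
    using nr_step_mean[OF ms, of "\<lambda>_. 1"] by simp
  also have "\<dots> = generation_weight lam N ms"
    using ms by (auto simp: generation_weight_conv_sum ennreal_sum_edge_rate nth_less_if_set_subset_lessThan
        intro!: sum.cong)
  finally show ?thesis .
qed

lemma nr_step_mean_weight:
  assumes ms: "set ms \<subseteq> {..<N}"
  shows "(\<integral>\<^sup>+ys. generation_weight lam N ys \<partial>nr_step lam N ms)
           = ennreal (nuN lam N) * generation_weight lam N ms"
proof -
  have "(\<integral>\<^sup>+ys. generation_weight lam N ys \<partial>nr_step lam N ms)
      = (\<Sum>j<length ms. \<Sum>i<N. ennreal (edge_rate lam N i (ms ! j)) * ennreal (lam N i))"
    using nr_step_mean[OF ms] by (simp add: generation_weight_def)
  also have "\<dots> = ennreal (nuN lam N) * generation_weight lam N ms"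
    using ms by (auto simp: generation_weight_conv_sum ennreal_sum_edge_rate_weighted sum_distrib_left
        nth_less_if_set_subset_lessThan intro!: sum.cong)
  finally show ?thesis .
qed

lemma nr_history_mean_weight:
  assumes "0 < N"
  shows "(\<integral>\<^sup>+h. generation_weight lam N (last h) \<partial>nr_history lam N t)
           = ennreal (muN lam N * nuN lam N ^ t)"
proof (induction t)
  case 0
  have "(\<integral>\<^sup>+h. generation_weight lam N (last h) \<partial>nr_history lam N 0)
      = (\<Sum>m\<in>{0..<N}. ennreal (lam N m)) / of_nat N"
    using assms by (simp add: generation_weight_def nn_integral_pmf_of_set)
  also have "\<dots> = ennreal (lN lam N) / ennreal (real N)"
    using pos by (subst sum_ennreal)
      (auto simp: lN_def atLeast0LessThan less_imp_le ennreal_of_nat_eq_real_of_nat)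
  also have "\<dots> = ennreal (muN lam N)"
    using assms lN_pos by (simp add: divide_ennreal muN_def)
  finally show ?case by simp
next
  case (Suc t)
  have "(\<integral>\<^sup>+h. generation_weight lam N (last h) \<partial>nr_history lam N (Suc t))
      = (\<integral>\<^sup>+h. \<integral>\<^sup>+ys. generation_weight lam N ys \<partial>nr_step lam N (last h) \<partial>nr_history lam N t)"
    by simp
  also have "\<dots> = (\<integral>\<^sup>+h. ennreal (nuN lam N) * generation_weight lam N (last h) \<partial>nr_history lam N t)"
    using set_last_nr_history[OF assms] by (intro nn_integral_cong_AE AE_pmfI nr_step_mean_weight)
  also have "\<dots> = ennreal (muN lam N * nuN lam N ^ Suc t)"
    using Suc.IH muN_nonneg nuN_nonneg by (simp add: nn_integral_cmult ennreal_mult' ennreal_mult mult_ac)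
  finally show ?case .
qed

lemma nr_history_mean_total:
  assumes "0 < N"
  shows "(\<integral>\<^sup>+h. of_nat (\<Sum>ms\<leftarrow>h. length ms) \<partial>nr_history lam N t) = ennreal (nr_mean_total lam N t)"
proof (induction t)
  case 0
  then show ?case using assms by (simp add: nr_mean_total_def)
next
  case (Suc t)
  have "(\<integral>\<^sup>+h. of_nat (\<Sum>ms\<leftarrow>h. length ms) \<partial>nr_history lam N (Suc t))
      = (\<integral>\<^sup>+h. of_nat (\<Sum>ms\<leftarrow>h. length ms)
           + (\<integral>\<^sup>+ys. of_nat (length ys) \<partial>nr_step lam N (last h)) \<partial>nr_history lam N t)"
    by (simp add: nn_integral_add)
  also have "\<dots> = (\<integral>\<^sup>+h. of_nat (\<Sum>ms\<leftarrow>h. length ms) + generation_weight lam N (last h) \<partial>nr_history lam N t)"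
    using set_last_nr_history[OF assms]
    by (intro nn_integral_cong_AE AE_pmfI arg_cong2[where f="(+)"] refl nr_step_mean_length)
  also have "\<dots> = ennreal (nr_mean_total lam N t) + ennreal (muN lam N * nuN lam N ^ t)"
    by (simp add: nn_integral_add Suc.IH nr_history_mean_weight[OF assms])
  also have "\<dots> = ennreal (nr_mean_total lam N (Suc t))"
    using nr_mean_total_nonneg muN_nonneg nuN_nonneg by (simp add: nr_mean_total_Suc ennreal_plus)
  finally show ?case .
qed

lemma nr_total_tail_le:
  assumes "0 < N" "0 < x"
  shows "nr_total_tail lam N t x \<le> nr_mean_total lam N t / x"
proof -
  have "(\<integral>\<^sup>+h. ennreal (real (\<Sum>k\<le>t. length (h ! k))) \<partial>nr_history lam N t)
      = (\<integral>\<^sup>+h. of_nat (\<Sum>ms\<leftarrow>h. length ms) \<partial>nr_history lam N t)"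
  proof (intro nn_integral_cong_AE AE_pmfI)
    fix h assume "h \<in> set_pmf (nr_history lam N t)"
    then have "length h = Suc t"
      using set_pmf_nr_history[OF assms(1)] by blast
    then show "ennreal (real (\<Sum>k\<le>t. length (h ! k))) = of_nat (\<Sum>ms\<leftarrow>h. length ms)"
      by (simp add: sum_list_sum_nth atLeast0LessThan lessThan_Suc_atMost
          ennreal_of_nat_eq_real_of_nat)
  qed
  then show ?thesis
    unfolding nr_total_tail_def using assms
    by (intro measure_pmf_Markov_inequality) (simp_all add: nr_history_mean_total nr_mean_total_nonneg)
qed

end

section \<open>Expected size of balls in the Poissonian random graph\<close>

fun graph_path :: "nat \<Rightarrow> (nat \<times> nat \<Rightarrow> nat) \<Rightarrow> nat \<Rightarrow> nat list \<Rightarrow> bool" where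
  "graph_path N e a [] = True"
| "graph_path N e a (u # ys) \<longleftrightarrow> (a, u) \<in> adj_rel N e \<and> graph_path N e u ys"

lemma graph_path_append_Cons: "graph_path N e a (pre @ b # zs) \<Longrightarrow> graph_path N e b zs"
  by (induction pre arbitrary: a) auto

lemma set_graph_path: "graph_path N e a xs \<Longrightarrow> set xs \<subseteq> {..<N}"
  by (induction xs arbitrary: a) (auto simp: adj_rel_def)

lemma relpow_adj_rel_imp_simple_path:
  assumes "(a, j) \<in> adj_rel N e ^^ k"
  shows "\<exists>xs. length xs \<le> k \<and> distinct (a # xs) \<and> graph_path N e a xs \<and> last (a # xs) = j"
  using assms
proof (induction k arbitrary: a)
  case 0
  then show ?case by auto
next
  case (Suc k)
  obtain u where u: "(a, u) \<in> adj_rel N e" "(u, j) \<in> adj_rel N e ^^ k"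
    using relpow_Suc_D2[OF Suc.prems] by blast
  obtain ys where ys: "length ys \<le> k" "distinct (u # ys)" "graph_path N e u ys" "last (u # ys) = j"
    using Suc.IH[OF u(2)] by blast
  show ?case
  proof (cases "a \<in> set (u # ys)")
    case False
    then show ?thesis using u ys by (intro exI[of _ "u # ys"]) auto
  next
    case True
    \<comment> \<open>the walk returns to \<open>a\<close>: cut off the loop\<close>
    then obtain pre zs where split: "u # ys = pre @ a # zs" by (meson split_list)
    have "Suc (length ys) = length pre + Suc (length zs)"
      using arg_cong[OF split, of length] by simp
    then have "length zs \<le> k"
      using ys(1) by linarith
    moreover have "distinct (a # zs)" "last (a # zs) = j"
      using ys(2,4) split by (auto simp: last_append)
    moreover have "graph_path N e a zs"
      using split ys(3) u(1) by (cases pre) (auto dest: graph_path_append_Cons)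
    ultimately show ?thesis by (intro exI[of _ zs]) auto
  qed
qed

definition node_lists :: "nat \<Rightarrow> nat \<Rightarrow> nat list set" where
  "node_lists N k = {xs. set xs \<subseteq> {..<N} \<and> length xs = k}"

lemma finite_node_lists: "finite (node_lists N k)"
  unfolding node_lists_def by (rule finite_lists_length_eq) simp

lemma node_lists_0: "node_lists N 0 = {[]}"
  by (auto simp: node_lists_def)

lemma node_lists_Suc: "node_lists N (Suc k) = (\<lambda>(xs, u). u # xs) ` (node_lists N k \<times> {..<N})"
  unfolding node_lists_def by (rule lists_length_Suc_eq)

definition simple_paths :: "nat \<Rightarrow> (nat \<times> nat \<Rightarrow> nat) \<Rightarrow> nat \<Rightarrow> nat \<Rightarrow> nat list set" where
  "simple_paths N e a k = {xs \<in> node_lists N k. distinct (a # xs) \<and> graph_path N e a xs}"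

lemma card_ball_le_simple_paths: "card (ball_t N e a t) \<le> (\<Sum>k\<le>t. card (simple_paths N e a k))"
proof -
  let ?ends = "\<Union>k\<le>t. (\<lambda>xs. last (a # xs)) ` simple_paths N e a k"
  have "ball_t N e a t \<subseteq> ?ends"
  proof
    fix j assume "j \<in> ball_t N e a t"
    then obtain k where k: "k \<le> t" "(a, j) \<in> adj_rel N e ^^ k"
      unfolding ball_t_def by auto
    then obtain xs where xs: "length xs \<le> k" "distinct (a # xs)" "graph_path N e a xs"
        "last (a # xs) = j"
      using relpow_adj_rel_imp_simple_path by blast
    then have "xs \<in> simple_paths N e a (length xs)"
      by (auto simp: simple_paths_def node_lists_def dest: set_graph_path)
    with k(1) xs(1,4) show "j \<in> ?ends"
      by (intro UN_I[of "length xs"] image_eqI[of j _ xs]) auto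
  qed
  then have "card (ball_t N e a t) \<le> card ?ends"
    by (intro card_mono) (auto simp: simple_paths_def finite_node_lists)
  also have "\<dots> \<le> (\<Sum>k\<le>t. card ((\<lambda>xs. last (a # xs)) ` simple_paths N e a k))"
    by (rule card_UN_le) simp
  also have "\<dots> \<le> (\<Sum>k\<le>t. card (simple_paths N e a k))"
    by (intro sum_mono card_image_le) (simp add: simple_paths_def finite_node_lists)
  finally show ?thesis .
qed

fun path_edges :: "nat \<Rightarrow> nat list \<Rightarrow> (nat \<times> nat) list" where
  "path_edges a [] = []"
| "path_edges a (u # ys) = (min a u, max a u) # path_edges u ys"

lemma path_edges_mem: "(i, j) \<in> set (path_edges a xs) \<Longrightarrow> i \<in> set (a # xs) \<and> j \<in> set (a # xs)"
  by (induction xs arbitrary: a) (auto simp: min_def max_def split: if_splits)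

lemma distinct_path_edges: "distinct (a # xs) \<Longrightarrow> distinct (path_edges a xs)"
proof (induction xs arbitrary: a)
  case (Cons u ys)
  have "(min a u, max a u) \<notin> set (path_edges u ys)"
    using Cons.prems path_edges_mem[of "min a u" "max a u" u ys] by (auto simp: min_def max_def)
  then show ?case using Cons by simp
qed simp

lemma path_edges_subset:
  "a < N \<Longrightarrow> set xs \<subseteq> {..<N} \<Longrightarrow> distinct (a # xs) \<Longrightarrow>
     set (path_edges a xs) \<subseteq> {(i, j). i < j \<and> j < N}"
  by (induction xs arbitrary: a) (auto simp: min_def max_def)

lemma graph_path_edges_present: "graph_path N e a xs \<Longrightarrow> x \<in> set (path_edges a xs) \<Longrightarrow> 0 < e x"
  by (induction xs arbitrary: a) (auto simp: adj_rel_def)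

fun path_rate :: "(nat \<Rightarrow> nat \<Rightarrow> real) \<Rightarrow> nat \<Rightarrow> nat \<Rightarrow> nat list \<Rightarrow> real" where
  "path_rate lam N a [] = 1"
| "path_rate lam N a (u # ys) = edge_rate lam N u a * path_rate lam N u ys"

lemma prod_list_path_edges:
  "(\<Prod>(i, j)\<leftarrow>path_edges a xs. edge_rate lam N i j) = path_rate lam N a xs"
  by (induction xs arbitrary: a) (auto simp: min_def max_def edge_rate_commute)

lemma sum_path_rate_Suc:
  "(\<Sum>xs\<in>node_lists N (Suc k). path_rate lam N a xs)
     = (\<Sum>u<N. edge_rate lam N u a * (\<Sum>ys\<in>node_lists N k. path_rate lam N u ys))"
proof -
  have "inj_on (\<lambda>(xs, u). u # xs) (node_lists N k \<times> {..<N})"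
    by (auto simp: inj_on_def)
  then have "(\<Sum>xs\<in>node_lists N (Suc k). path_rate lam N a xs)
      = (\<Sum>(ys, u)\<in>node_lists N k \<times> {..<N}. path_rate lam N a (u # ys))"
    unfolding node_lists_Suc by (subst sum.reindex) (simp_all add: case_prod_unfold)
  also have "\<dots> = (\<Sum>u<N. edge_rate lam N u a * (\<Sum>ys\<in>node_lists N k. path_rate lam N u ys))"
    by (simp add: sum.cartesian_product[symmetric] sum.swap[of _ "node_lists N k"] sum_distrib_left)
  finally show ?thesis .
qed

lemma nr_mean_total_eq_average:
  assumes "0 < N"
  shows "nr_mean_total lam N t = (\<Sum>a<N. 1 + (\<Sum>k<t. lam N a * nuN lam N ^ k)) / real N"
proof -
  have "(\<Sum>a<N. \<Sum>k<t. lam N a * nuN lam N ^ k) = (\<Sum>k<t. lN lam N * nuN lam N ^ k)"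
    by (subst sum.swap) (simp add: lN_def sum_distrib_right)
  then show ?thesis
    using assms by (simp add: nr_mean_total_def sum.distrib muN_def add_divide_distrib sum_divide_distrib)
qed

context pos_capacities
begin

lemma path_rate_nonneg: "a < N \<Longrightarrow> set xs \<subseteq> {..<N} \<Longrightarrow> 0 \<le> path_rate lam N a xs"
  by (induction xs arbitrary: a) (auto intro!: mult_nonneg_nonneg less_imp_le[OF edge_rate_pos])

lemma sum_path_rate:
  "a < N \<Longrightarrow> (\<Sum>xs\<in>node_lists N (Suc k). path_rate lam N a xs) = lam N a * nuN lam N ^ k"
proof (induction k arbitrary: a)
  case 0
  then show ?case by (simp add: sum_path_rate_Suc node_lists_0 sum_edge_rate)
next
  case (Suc k)
  have "(\<Sum>xs\<in>node_lists N (Suc (Suc k)). path_rate lam N a xs)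
      = (\<Sum>u<N. edge_rate lam N u a * (lam N u * nuN lam N ^ k))"
    unfolding sum_path_rate_Suc[where k = "Suc k"] by (intro sum.cong) (auto simp: Suc.IH)
  also have "\<dots> = (\<Sum>u<N. edge_rate lam N u a * lam N u) * nuN lam N ^ k"
    by (subst sum_distrib_right) (simp add: mult_ac)
  also have "\<dots> = lam N a * nuN lam N ^ Suc k"
    by (simp only: sum_edge_rate_weighted) (simp add: mult_ac)
  finally show ?case .
qed

lemma prob_graph_path_le:
  assumes "a < N" "set xs \<subseteq> {..<N}" "distinct (a # xs)"
  shows "measure_pmf.prob (poi_graph lam N) {e. graph_path N e a xs} \<le> path_rate lam N a xs"
proof -
  define A where "A = {(i, j). i < j \<and> j < N}"
  define K where "K = set (path_edges a xs)"
  have "measure_pmf.prob (poi_graph lam N) {e. graph_path N e a xs}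
      \<le> measure_pmf.prob (poi_graph lam N) {e. \<forall>x\<in>K. 0 < e x}"
    unfolding K_def by (intro measure_pmf.finite_measure_mono) (auto dest: graph_path_edges_present)
  also have "\<dots> \<le> (\<Prod>(i, j)\<in>K. edge_rate lam N i j)"
    unfolding poi_graph_def edge_rate_def[symmetric] A_def[symmetric]
  proof (rule prob_Pi_pmf_poisson_all_pos_le)
    show "finite A"
      by (rule finite_subset[of _ "{..<N} \<times> {..<N}"]) (auto simp: A_def)
    show "K \<subseteq> A"
      unfolding K_def A_def using assms by (rule path_edges_subset)
  qed (auto simp: A_def intro: edge_rate_pos)
  also have "\<dots> = path_rate lam N a xs"
    using distinct_path_edges[OF assms(3)]
    by (simp add: K_def prod.distinct_set_conv_list prod_list_path_edges)
  finally show ?thesis .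
qed

lemma graph_ball_mean_le:
  assumes a: "a < N"
  shows "(\<integral>\<^sup>+e. of_nat (card (ball_t N e a t)) \<partial>poi_graph lam N)
           \<le> ennreal (1 + (\<Sum>k<t. lam N a * nuN lam N ^ k))"
proof -
  have "(\<integral>\<^sup>+e. of_nat (card (ball_t N e a t)) \<partial>poi_graph lam N)
      \<le> (\<integral>\<^sup>+e. (\<Sum>k\<le>t. of_nat (card (simple_paths N e a k))) \<partial>poi_graph lam N)"
    by (intro nn_integral_mono) (simp add: card_ball_le_simple_paths flip: of_nat_sum)
  also have "\<dots> = (\<Sum>k\<le>t. \<Sum>xs\<in>node_lists N k.
                     emeasure (poi_graph lam N) {e. distinct (a # xs) \<and> graph_path N e a xs})"
    by (simp add: nn_integral_sum simple_paths_def nn_integral_card_filter finite_node_lists)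
  also have "\<dots> \<le> (\<Sum>k\<le>t. \<Sum>xs\<in>node_lists N k. ennreal (path_rate lam N a xs))"
  proof (intro sum_mono)
    fix k xs assume "xs \<in> node_lists N k"
    then have xs: "set xs \<subseteq> {..<N}" by (simp add: node_lists_def)
    show "emeasure (poi_graph lam N) {e. distinct (a # xs) \<and> graph_path N e a xs}
        \<le> ennreal (path_rate lam N a xs)"
    proof (cases "distinct (a # xs)")
      case True
      then show ?thesis
        using prob_graph_path_le[OF a xs True] by (simp add: measure_pmf.emeasure_eq_measure ennreal_leI)
    qed (simp del: distinct.simps)
  qed
  also have "\<dots> = (\<Sum>k\<le>t. ennreal (\<Sum>xs\<in>node_lists N k. path_rate lam N a xs))"
    using a by (intro sum.cong refl sum_ennreal) (auto simp: node_lists_def path_rate_nonneg)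
  also have "\<dots> = ennreal (\<Sum>k\<le>t. \<Sum>xs\<in>node_lists N k. path_rate lam N a xs)"
    using a by (intro sum_ennreal sum_nonneg) (auto simp: node_lists_def path_rate_nonneg)
  also have "(\<Sum>k\<le>t. \<Sum>xs\<in>node_lists N k. path_rate lam N a xs) = 1 + (\<Sum>k<t. lam N a * nuN lam N ^ k)"
    using a by (simp add: sum.atMost_shift node_lists_0 sum_path_rate)
  finally show ?thesis .
qed

lemma graph_ball_tail_le:
  assumes "0 < N" "0 < x"
  shows "graph_ball_tail lam N t x \<le> nr_mean_total lam N t / x"
proof -
  let ?ball = "\<lambda>(a, e). real (card (ball_t N e a t))"
  have "(\<integral>\<^sup>+y. ennreal (?ball y) \<partial>pair_pmf (pmf_of_set {0..<N}) (poi_graph lam N))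
      = (\<integral>\<^sup>+a. \<integral>\<^sup>+e. of_nat (card (ball_t N e a t)) \<partial>poi_graph lam N \<partial>pmf_of_set {0..<N})"
    by (simp add: nn_integral_pair_pmf' case_prod_unfold flip: ennreal_of_nat_eq_real_of_nat)
  also have "\<dots> \<le> (\<integral>\<^sup>+a. ennreal (1 + (\<Sum>k<t. lam N a * nuN lam N ^ k)) \<partial>pmf_of_set {0..<N})"
    using assms(1) by (intro nn_integral_mono_AE AE_pmfI graph_ball_mean_le) auto
  also have "\<dots> = (\<Sum>a<N. ennreal (1 + (\<Sum>k<t. lam N a * nuN lam N ^ k))) / of_nat N"
    using assms(1) by (subst nn_integral_pmf_of_set) (auto simp: atLeast0LessThan)
  also have "\<dots> = ennreal (nr_mean_total lam N t)"
  proof -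
    have terms: "0 \<le> 1 + (\<Sum>k<t. lam N a * nuN lam N ^ k)" if "a < N" for a
      using pos[OF that] nuN_nonneg by (intro add_nonneg_nonneg sum_nonneg) auto
    then have "0 \<le> (\<Sum>a<N. 1 + (\<Sum>k<t. lam N a * nuN lam N ^ k))"
      by (intro sum_nonneg) auto
    then show ?thesis
      using assms(1) terms
      by (subst sum_ennreal) (auto simp: nr_mean_total_eq_average divide_ennreal
          ennreal_of_nat_eq_real_of_nat)
  qed
  finally have "measure_pmf.prob (pair_pmf (pmf_of_set {0..<N}) (poi_graph lam N)) {y. x < ?ball y}
      \<le> nr_mean_total lam N t / x"
    using assms(2) nr_mean_total_nonneg by (intro measure_pmf_Markov_inequality)
  moreover have "{(a, e). x < real (card (ball_t N e a t))} = {y. x < ?ball y}"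
    by auto
  ultimately show ?thesis
    by (simp add: graph_ball_tail_def)
qed

end

section \<open>Asymptotics\<close>

lemma ln_mult_powr_neg_le:
  assumes "0 < \<alpha>" "1 \<le> (x::real)"
  shows "ln x * x powr - \<alpha> \<le> 1 / \<alpha>"
proof -
  have "\<alpha> * ln x = ln (x powr \<alpha>)"
    using assms by (simp add: ln_powr)
  also have "\<dots> \<le> x powr \<alpha>"
    using assms ln_le_minus_one[of "x powr \<alpha>"] by simp
  finally have "\<alpha> * (ln x * x powr - \<alpha>) \<le> x powr \<alpha> * x powr - \<alpha>"
    using assms by (simp add: mult_right_mono mult.assoc[symmetric])
  then show ?thesis
    using assms by (simp add: powr_add[symmetric] field_simps)
qed

lemma power_add_le_exp:
  fixes q x :: real
  assumes "0 < q" "0 \<le> x"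
  shows "(q + x) ^ k \<le> q ^ k * exp (k * x / q)"
proof -
  have "(q + x) ^ k = q ^ k * (1 + x / q) ^ k"
    using assms by (simp add: power_mult_distrib[symmetric] field_simps)
  also have "(1 + x / q) ^ k \<le> exp (x / q) ^ k"
    using assms by (intro power_mono) (auto simp: add.commute exp_ge_add_one_self)
  also have "exp (x / q) ^ k = exp (k * x / q)"
    by (simp add: exp_of_nat_mult[symmetric])
  finally show ?thesis
    using assms by (simp add: mult_left_mono)
qed

lemma power_le_powr_if_le_log:
  assumes "1 < q" "0 < x" "real k \<le> a * log q x"
  shows "q ^ k \<le> x powr a"
proof -
  have "q ^ k = q powr real k"
    using assms by (simp add: powr_realpow)
  also have "\<dots> \<le> q powr (a * log q x)"
    using assms by (intro powr_mono) auto
  also have "\<dots> = (q powr log q x) powr a"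
    by (simp add: powr_powr mult.commute)
  also have "\<dots> = x powr a"
    using assms by simp
  finally show ?thesis .
qed

lemma perturbed_power_le:
  assumes "1 < q" "0 < \<alpha>" "0 \<le> c" "1 \<le> x" "0 \<le> p" "p \<le> q + c * x powr - \<alpha>"
    and "0 \<le> a" "a \<le> 1" "real k \<le> a * log q x"
  shows "p ^ k \<le> exp (c / (q * \<alpha> * ln q)) * x powr a"
proof -
  have "0 \<le> log q x"
    using assms by simp
  then have "real k \<le> log q x"
    using assms mult_right_mono[of a 1 "log q x"] by linarith
  then have "real k * (c * x powr - \<alpha>) / q \<le> log q x * (c * x powr - \<alpha>) / q"
    using assms by (intro divide_right_mono mult_right_mono) auto
  also have "\<dots> = c / (q * ln q) * (ln x * x powr - \<alpha>)"
    by (simp add: log_def mult_ac)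
  also have "\<dots> \<le> c / (q * ln q) * (1 / \<alpha>)"
    using assms by (intro mult_left_mono ln_mult_powr_neg_le) auto
  finally have exponent: "real k * (c * x powr - \<alpha>) / q \<le> c / (q * \<alpha> * ln q)"
    by (simp add: mult_ac)
  have "p ^ k \<le> (q + c * x powr - \<alpha>) ^ k"
    using assms by (intro power_mono) auto
  also have "\<dots> \<le> q ^ k * exp (real k * (c * x powr - \<alpha>) / q)"
    using assms by (intro power_add_le_exp) auto
  also have "\<dots> \<le> x powr a * exp (c / (q * \<alpha> * ln q))"
    using assms exponent by (intro mult_mono power_le_powr_if_le_log) simp_all
  finally show ?thesis
    by (simp add: mult.commute)
qed

lemma one_plus_powr_div_powr_le:
  fixes x L K a b :: real
  assumes "1 \<le> x" "1 \<le> L" "0 \<le> K" "0 \<le> a"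
  shows "(1 + L * K * x powr a) / x powr b \<le> (1 + K) * L * x powr (a - b)"
proof -
  have "(1 + L * K * x powr a) / x powr b = x powr - b + L * K * x powr (a - b)"
    using assms by (simp add: add_divide_distrib powr_minus_divide powr_diff)
  also have "x powr - b \<le> L * x powr (a - b)"
    using assms order.trans[OF powr_mono[of "- b" "a - b" x]] by (simp add: mult_le_cancel_right1)
  finally show ?thesis
    by (simp add: algebra_simps)
qed

context pos_capacities
begin

lemma nr_mean_total_le:
  fixes \<nu> \<alpha> c M a :: real
  assumes "1 < \<nu>" "0 < \<alpha>" "0 \<le> c" "1 \<le> real N"
    and "muN lam N \<le> M" "nuN lam N \<le> \<nu> + c * real N powr - \<alpha>"
    and "0 \<le> a" "a \<le> 1" "real t \<le> a * log \<nu> (real N)"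
  shows "nr_mean_total lam N t \<le> 1 + log \<nu> (real N) * M * exp (c / (\<nu> * \<alpha> * ln \<nu>)) * real N powr a"
proof -
  define E where "E = exp (c / (\<nu> * \<alpha> * ln \<nu>))"
  have "real t \<le> log \<nu> (real N)"
    using assms mult_right_mono[of a 1 "log \<nu> (real N)"] by simp
  have M: "0 \<le> M"
    using muN_nonneg assms by linarith
  have "(\<Sum>k<t. muN lam N * nuN lam N ^ k) \<le> (\<Sum>k<t. M * (E * real N powr a))"
  proof (intro sum_mono mult_mono)
    fix k assume "k \<in> {..<t}"
    then have "real k \<le> a * log \<nu> (real N)"
      using assms by simp
    then show "nuN lam N ^ k \<le> E * real N powr a"
      unfolding E_def using assms nuN_nonneg by (intro perturbed_power_le) auto
  qed (use assms M muN_nonneg nuN_nonneg in auto)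
  also have "\<dots> \<le> log \<nu> (real N) * (M * E * real N powr a)"
    using \<open>real t \<le> log \<nu> (real N)\<close> M by (simp add: mult_right_mono E_def mult.assoc)
  finally show ?thesis
    by (simp add: nr_mean_total_def E_def mult_ac)
qed

lemma nr_mean_total_div_powr_le:
  fixes \<nu> \<alpha> c M \<eta> \<delta> :: real
  assumes "1 < \<nu>" "0 < \<alpha>" "0 \<le> c" "\<nu> \<le> real N"
    and "muN lam N \<le> M" "nuN lam N \<le> \<nu> + c * real N powr - \<alpha>"
    and "-1/2 < \<eta>" "\<eta> < 1/2" "real t \<le> (1/2 + \<eta>) * log \<nu> (real N)"
  shows "nr_mean_total lam N t / real N powr (1/2 + \<delta>)
           \<le> (1 + M * exp (c / (\<nu> * \<alpha> * ln \<nu>))) * log \<nu> (real N) * real N powr - (\<delta> - \<eta>)"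
proof -
  define L where "L = log \<nu> (real N)"
  define K where "K = M * exp (c / (\<nu> * \<alpha> * ln \<nu>))"
  have N: "1 \<le> real N" and L: "1 \<le> L" and K: "0 \<le> K"
    using assms muN_nonneg by (auto simp: L_def K_def le_log_iff)
  have "nr_mean_total lam N t / real N powr (1/2 + \<delta>)
      \<le> (1 + L * K * real N powr (1/2 + \<eta>)) / real N powr (1/2 + \<delta>)"
    using nr_mean_total_le[of \<nu> \<alpha> c M "1/2 + \<eta>"] assms N
    by (intro divide_right_mono) (auto simp: L_def K_def mult.assoc)
  also have "\<dots> \<le> (1 + K) * L * real N powr ((1/2 + \<eta>) - (1/2 + \<delta>))"
    using N L K assms by (intro one_plus_powr_div_powr_le) auto
  finally show ?thesis
    by (simp add: L_def K_def)
qed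

end

lemma cond_C1_eventually_bounded:
  assumes "cond_C1 lam mu nu"
  obtains \<alpha> c N1 where "1 < nu" "0 < \<alpha>" "0 \<le> c"
    "\<And>N. N1 \<le> N \<Longrightarrow> muN lam N \<le> mu + c \<and> nuN lam N \<le> nu + c * real N powr - \<alpha>"
proof -
  obtain \<alpha> where nu: "1 < nu" and \<alpha>: "0 < \<alpha>"
    and O_mu: "(\<lambda>N. \<bar>muN lam N - mu\<bar>) \<in> O(\<lambda>N. real N powr - \<alpha>)"
    and O_nu: "(\<lambda>N. \<bar>nuN lam N - nu\<bar>) \<in> O(\<lambda>N. real N powr - \<alpha>)"
    using assms unfolding cond_C1_def by blast
  obtain c1 where c1: "0 < c1" "\<forall>\<^sub>F N in at_top. \<bar>muN lam N - mu\<bar> \<le> c1 * real N powr - \<alpha>"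
    using landau_o.bigE[OF O_mu] by auto
  obtain c2 where c2: "0 < c2" "\<forall>\<^sub>F N in at_top. \<bar>nuN lam N - nu\<bar> \<le> c2 * real N powr - \<alpha>"
    using landau_o.bigE[OF O_nu] by auto
  obtain N1 where N1: "\<And>N. N1 \<le> N \<Longrightarrow>
      \<bar>muN lam N - mu\<bar> \<le> c1 * real N powr - \<alpha> \<and> \<bar>nuN lam N - nu\<bar> \<le> c2 * real N powr - \<alpha>"
    using eventually_conj[OF c1(2) c2(2)] unfolding eventually_at_top_linorder by blast
  have "muN lam N \<le> mu + (c1 + c2) \<and> nuN lam N \<le> nu + (c1 + c2) * real N powr - \<alpha>"
    if "max N1 1 \<le> N" for N
  proof -
    have "real N powr - \<alpha> \<le> 1"
      using that \<alpha> powr_less_one[of "real N" "- \<alpha>"] by (cases "N = 1") auto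
    then have "c1 * real N powr - \<alpha> \<le> c1" "0 \<le> c1 * real N powr - \<alpha>"
      using c1(1) by (simp_all add: mult_left_le)
    moreover have "\<bar>muN lam N - mu\<bar> \<le> c1 * real N powr - \<alpha>" "\<bar>nuN lam N - nu\<bar> \<le> c2 * real N powr - \<alpha>"
      using N1[of N] that by auto
    ultimately show ?thesis
      using c2(1) by (simp add: distrib_right abs_le_iff)
  qed
  then show thesis
    using that[of \<alpha> "c1 + c2" "max N1 1"] nu \<alpha> c1(1) c2(1) by auto
qed

theorem lemmaD2:
  fixes lam :: "nat \<Rightarrow> nat \<Rightarrow> real" and mu nu \<eta> \<delta> :: real
  assumes pos: "\<And>N i. i < N \<Longrightarrow> lam N i > 0"
    and C1: "cond_C1 lam mu nu"
    and C2: "cond_C2 lam"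
    and C3: "cond_C3 lam"
    and eta: "-1/2 < \<eta>" "\<eta> < 1/2"
    and delta: "-1/2 < \<delta>" "\<delta> < 1/2"
  shows "\<exists>C N0. \<forall>N\<ge>N0. \<forall>t::nat. real t \<le> (1/2 + \<eta>) * log nu (real N) \<longrightarrow>
           nr_total_tail lam N t (real N powr (1/2 + \<delta>))
              \<le> C * log nu (real N) * real N powr (-(\<delta> - \<eta>)) \<and>
           graph_ball_tail lam N t (real N powr (1/2 + \<delta>))
              \<le> C * log nu (real N) * real N powr (-(\<delta> - \<eta>))"
proof -
  \<comment> \<open>The first-moment bound uses only (C1).\<close>
  obtain \<alpha> c N1 where nu: "1 < nu" and "0 < \<alpha>" "0 \<le> c" and bounds:
    "\<And>N. N1 \<le> N \<Longrightarrow> muN lam N \<le> mu + c \<and> nuN lam N \<le> nu + c * real N powr - \<alpha>"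
    using cond_C1_eventually_bounded[OF C1] by blast
  define C where "C = 1 + (mu + c) * exp (c / (nu * \<alpha> * ln nu))"
  show ?thesis
  proof (intro exI[of _ C] exI[of _ "max N1 (nat \<lceil>nu\<rceil>)"] allI impI)
    fix N t
    assume N: "max N1 (nat \<lceil>nu\<rceil>) \<le> N" and t: "real t \<le> (1/2 + \<eta>) * log nu (real N)"
    then have "nu \<le> real N"
      by (meson max.boundedE of_nat_mono order.trans real_nat_ceiling_ge)
    with nu have "0 < N" "0 < real N powr (1/2 + \<delta>)"
      by auto
    interpret pos_capacities lam N
      using pos by unfold_locales
    have "nr_mean_total lam N t / real N powr (1/2 + \<delta>) \<le> C * log nu (real N) * real N powr - (\<delta> - \<eta>)"
      unfolding C_def using \<open>nu \<le> real N\<close> bounds[of N] N nu \<open>0 < \<alpha>\<close> \<open>0 \<le> c\<close> eta t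
      by (intro nr_mean_total_div_powr_le) auto
    then show "nr_total_tail lam N t (real N powr (1/2 + \<delta>)) \<le> C * log nu (real N) * real N powr (-(\<delta> - \<eta>)) \<and>
        graph_ball_tail lam N t (real N powr (1/2 + \<delta>)) \<le> C * log nu (real N) * real N powr (-(\<delta> - \<eta>))"
      using nr_total_tail_le graph_ball_tail_le \<open>0 < N\<close> \<open>0 < real N powr (1/2 + \<delta>)\<close>
      by (meson order.trans)
  qed
qed

end
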